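(* Suppose $\phi_1,\phi_2$ satisfy the Doubrov–Ferapontov modified heavenly hierarchy $(\Phi_1\wedge\Phi_2)_-=0$, and let $u$ be a function with $g_1=u_x$ and $f_1=u_y$ (so that $f_{1,z_j}=u_{yz_j}$, $g_{1,z_j}=u_{xz_j}$). Then the Lax–Sato equations take the Hamiltonian form $$\frac{\partial\vec\phi}{\partial t_n}=\{-\lambda^n y+A_n,\vec\phi\}\ (n\ge1),\qquad \lambda\frac{\partial\vec\phi}{\partial z_j}=\{-\lambda^j x+B_j,\vec\phi\}\ (j\ge2),\qquad \lambda\frac{\partial\vec\phi}{\partial z_1}=\{B_1,\vec\phi\},$$ where $A_n=\sum_{k=1}^{n}\lambda^{n-k}g_k$, $B_j=-\sum_{m=1}^{j}\lambda^{j-m}f_m-u_{z_j}$ for $j\ge2$, and $B_1=-u_{z_1}$.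
   Context: Independent variables are $x,y$ and two infinite families $t_1,t_2,\dots$ and $z_1,z_2,\dots$; write $t:=t_1$, $z:=z_1$. $\lambda$ is a formal spectral parameter; $(\cdot)_+$ and $(\cdot)_-$ denote the parts of a formal Laurent series in $\lambda$ with nonnegative, resp. negative, powers. Consider formal series $\phi_1=-y+\sum_{j\ge2}z_j\lambda^{j-1}+\sum_{k\ge1}g_k\lambda^{-k}$, $\phi_2=x+t_1\lambda+\sum_{n\ge2}t_n\lambda^n+\sum_{m\ge1}f_m\lambda^{-m}$, where $g_k,f_m$ are functions of $(x,y,t_1,t_2,\dots,z_1,z_2,\dots)$, and $\vec\phi=(\phi_1,\phi_2)^T$. Define the 1-forms $\Phi_i=\phi_{i,x}dx+\phi_{i,y}dy+\sum_{n\ge1}\phi_{i,t_n}dt_n+\lambda\sum_{j\ge1}\phi_{i,z_j}dz_j$. The Doubrov–Ferapontov modified heavenly hierarchy is $(\Phi_1\wedge\Phi_2)_-=0$: the negative-power part of the coefficient of every basis 2-form vanishes, the coefficient of $da\wedge db$ being $\lambda^{\epsilon}(\phi_{1,a}\phi_{2,b}-\phi_{1,b}\phi_{2,a})$ with $\epsilon$ the number of $z$-variables among $a,b$. The Poisson bracket is $\{F,G\}=F_xG_y-F_yG_x$, applied componentwise to $\vec\phi$. Subscripts denote partial derivatives. *)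

theory Defs
  imports "HOL-Analysis.Analysis" "HOL-Computational_Algebra.Formal_Laurent_Series"
begin

text \<open>Independent variables: X = x, Y = y, T n = t_n, Z n = z_n (n \<ge> 1).
  The coordinates T 0 and Z 0 are inert dummy coordinates (not among the paper's variables).\<close>
datatype coord = X | Y | T nat | Z nat

fun valid_coord :: "coord \<Rightarrow> bool" where
  "valid_coord (T n) = (n \<ge> 1)"
| "valid_coord (Z n) = (n \<ge> 1)"
| "valid_coord _ = True"

type_synonym point = "coord \<Rightarrow> real"

definition pd :: "coord \<Rightarrow> (point \<Rightarrow> real) \<Rightarrow> point \<Rightarrow> real" where
  "pd a F p = deriv (\<lambda>h. F (p(a := h))) (p a)"

fun ipd :: "coord list \<Rightarrow> (point \<Rightarrow> real) \<Rightarrow> point \<Rightarrow> real" where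
  "ipd [] F = F"
| "ipd (a # as) F = pd a (ipd as F)"

definition smooth_fn :: "(point \<Rightarrow> real) \<Rightarrow> bool" where
  "smooth_fn F \<longleftrightarrow>
     (\<forall>as a p. (\<lambda>h. ipd as F (p(a := h))) differentiable (at (p a))) \<and>
     (\<forall>as a b p. continuous_on UNIV (\<lambda>v::real \<times> real. ipd as F (p(a := fst v, b := snd v))))"

text \<open>Such series are represented as formal Laurent series (type fls) in \<mu> = 1/lambda;
  the coefficient of \<lambda>^k is the coefficient of \<mu>^(-k).\<close>

definition lamb :: "real fls" where "lamb = fls_X_inv"

definition lcoeff :: "real fls \<Rightarrow> int \<Rightarrow> real" where
  "lcoeff F k = fls_nth F (- k)"

text \<open>The series with coefficient c k at \<lambda>^k (meaningful when c is bounded above).\<close>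
definition lser :: "(int \<Rightarrow> real) \<Rightarrow> real fls" where
  "lser c = Abs_fls (\<lambda>n. c (- n))"

definition neg_part_zero :: "real fls \<Rightarrow> bool" where
  "neg_part_zero F \<longleftrightarrow> (\<forall>k < 0. lcoeff F k = 0)"

text \<open>Families of functions indexed by the power of \<lambda> (series with function coefficients).\<close>
type_synonym cfam = "int \<Rightarrow> point \<Rightarrow> real"

definition D :: "coord \<Rightarrow> cfam \<Rightarrow> point \<Rightarrow> real fls" where
  "D a c p = lser (\<lambda>k. pd a (c k) p)"

definition coeffs :: "(point \<Rightarrow> real fls) \<Rightarrow> cfam" where
  "coeffs H = (\<lambda>k q. lcoeff (H q) k)"

definition PB :: "cfam \<Rightarrow> cfam \<Rightarrow> point \<Rightarrow> real fls" where
  "PB F G p = D X F p * D Y G p - D Y F p * D X G p"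

text \<open>phi1 = -y + \<Sum>_{j\<ge>2} z_j \<lambda>^(j-1) + \<Sum>_{k\<ge>1} g_k \<lambda>^(-k).\<close>
definition phi1 :: "(nat \<Rightarrow> point \<Rightarrow> real) \<Rightarrow> cfam" where
  "phi1 g k = (if k < 0 then g (nat (- k))
               else if k = 0 then (\<lambda>p. - p Y)
               else (\<lambda>p. p (Z (nat k + 1))))"

text \<open>phi2 = x + t_1 \<lambda> + \<Sum>_{n\<ge>2} t_n \<lambda>^n + \<Sum>_{m\<ge>1} f_m \<lambda>^(-m).\<close>
definition phi2 :: "(nat \<Rightarrow> point \<Rightarrow> real) \<Rightarrow> cfam" where
  "phi2 f k = (if k < 0 then f (nat (- k))
               else if k = 0 then (\<lambda>p. p X)
               else (\<lambda>p. p (T (nat k))))"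

fun zcount :: "coord \<Rightarrow> nat" where
  "zcount (Z _) = 1"
| "zcount _ = 0"

definition DF_hierarchy :: "(nat \<Rightarrow> point \<Rightarrow> real) \<Rightarrow> (nat \<Rightarrow> point \<Rightarrow> real) \<Rightarrow> bool" where
  "DF_hierarchy g f \<longleftrightarrow>
     (\<forall>a b p. valid_coord a \<longrightarrow> valid_coord b \<longrightarrow>
        neg_part_zero (lamb ^ (zcount a + zcount b) *
          (D a (phi1 g) p * D b (phi2 f) p - D b (phi1 g) p * D a (phi2 f) p)))"

end

theory Submission
  imports Defs
begin

(*
  The coefficient of dx \<and> dy in Phi1 \<and> Phi2 is the Poisson bracket {phi1, phi2}, which is 1
  plus negative powers of lambda; the hierarchy therefore normalises it to {phi1, phi2} = 1. For any
  other time a (a = t_n, or a = z_j with the extra factor lambda), the coefficients of dx \<and> da and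
  dy \<and> da have no negative part, so they equal their polynomial parts, and these are exactly H_x and
  H_y for the stated Hamiltonian H; the terms g_1 = u_x, f_1 = u_y are matched by u_{x z_j} = u_{z_j x}
  (Schwarz's theorem). Solving the linear system for (H_x, H_y) by Cramer's rule, with determinant
  {phi1, phi2} = 1, gives {H, phi_i} = lambda^eps * phi_{i,a}.
*)

section \<open>Symmetry of mixed partial derivatives\<close>

lemma mixed_second_difference_mvt:
  fixes G Gs Gt Gst Gts :: "real \<Rightarrow> real \<Rightarrow> real"
  assumes d_s: "\<And>s t. ((\<lambda>s. G s t) has_real_derivative Gs s t) (at s)"
    and d_st: "\<And>s t. ((\<lambda>t. Gs s t) has_real_derivative Gst s t) (at t)"
    and d_t: "\<And>s t. ((\<lambda>t. G s t) has_real_derivative Gt s t) (at t)"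
    and d_ts: "\<And>s t. ((\<lambda>s. Gt s t) has_real_derivative Gts s t) (at s)"
    and h: "h > 0"
  obtains \<xi> \<eta> \<sigma> \<tau> where "\<xi> \<in> {s0<..<s0+h}" "\<sigma> \<in> {s0<..<s0+h}"
    "\<eta> \<in> {t0<..<t0+h}" "\<tau> \<in> {t0<..<t0+h}" "Gst \<xi> \<eta> = Gts \<sigma> \<tau>"
proof -
  have s: "s0 < s0 + h" and t: "t0 < t0 + h" using h by auto
  obtain \<xi> where \<xi>: "s0 < \<xi>" "\<xi> < s0 + h"
    "(G (s0+h) (t0+h) - G (s0+h) t0) - (G s0 (t0+h) - G s0 t0) = h * (Gs \<xi> (t0+h) - Gs \<xi> t0)"
    using MVT2[OF s, of "\<lambda>s. G s (t0+h) - G s t0" "\<lambda>s. Gs s (t0+h) - Gs s t0"]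
      DERIV_diff[OF d_s d_s] by auto
  obtain \<eta> where \<eta>: "t0 < \<eta>" "\<eta> < t0 + h" "Gs \<xi> (t0+h) - Gs \<xi> t0 = h * Gst \<xi> \<eta>"
    using MVT2[OF t, of "Gs \<xi>" "Gst \<xi>"] d_st by auto
  obtain \<tau> where \<tau>: "t0 < \<tau>" "\<tau> < t0 + h"
    "(G (s0+h) (t0+h) - G s0 (t0+h)) - (G (s0+h) t0 - G s0 t0) = h * (Gt (s0+h) \<tau> - Gt s0 \<tau>)"
    using MVT2[OF t, of "\<lambda>t. G (s0+h) t - G s0 t" "\<lambda>t. Gt (s0+h) t - Gt s0 t"]
      DERIV_diff[OF d_t d_t] by auto
  obtain \<sigma> where \<sigma>: "s0 < \<sigma>" "\<sigma> < s0 + h" "Gt (s0+h) \<tau> - Gt s0 \<tau> = h * Gts \<sigma> \<tau>"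
    using MVT2[OF s, of "\<lambda>s. Gt s \<tau>" "\<lambda>s. Gts s \<tau>"] d_ts by auto
  \<comment> \<open>both expansions compute the same second difference of G over the square of side h\<close>
  have "h * (h * Gst \<xi> \<eta>) = h * (h * Gts \<sigma> \<tau>)"
    using \<xi>(3) \<eta>(3) \<tau>(3) \<sigma>(3) by (simp add: algebra_simps)
  with h have "Gst \<xi> \<eta> = Gts \<sigma> \<tau>" by simp
  with \<xi> \<eta> \<sigma> \<tau> show thesis using that by simp
qed

lemma mixed_partials_eq:
  fixes G Gs Gt Gst Gts :: "real \<Rightarrow> real \<Rightarrow> real"
  assumes d_s: "\<And>s t. ((\<lambda>s. G s t) has_real_derivative Gs s t) (at s)"
    and d_st: "\<And>s t. ((\<lambda>t. Gs s t) has_real_derivative Gst s t) (at t)"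
    and d_t: "\<And>s t. ((\<lambda>t. G s t) has_real_derivative Gt s t) (at t)"
    and d_ts: "\<And>s t. ((\<lambda>s. Gt s t) has_real_derivative Gts s t) (at s)"
    and c_st: "continuous_on UNIV (\<lambda>v. Gst (fst v) (snd v))"
    and c_ts: "continuous_on UNIV (\<lambda>v. Gts (fst v) (snd v))"
  shows "Gst s0 t0 = Gts s0 t0"
proof -
  have close: "\<bar>Gst s0 t0 - Gts s0 t0\<bar> < 2 * e" if e: "e > 0" for e
  proof -
    obtain \<delta>st where \<delta>st: "\<delta>st > 0"
      "\<And>v. dist v (s0, t0) < \<delta>st \<Longrightarrow> dist (Gst (fst v) (snd v)) (Gst s0 t0) < e"
      using c_st e unfolding continuous_on_iff by (metis UNIV_I fst_conv snd_conv)
    obtain \<delta>ts where \<delta>ts: "\<delta>ts > 0"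
      "\<And>v. dist v (s0, t0) < \<delta>ts \<Longrightarrow> dist (Gts (fst v) (snd v)) (Gts s0 t0) < e"
      using c_ts e unfolding continuous_on_iff by (metis UNIV_I fst_conv snd_conv)
    define h where "h = min \<delta>st \<delta>ts / 2"
    have h: "h > 0" using \<delta>st \<delta>ts by (simp add: h_def)
    have near: "dist (a, b) (s0, t0) < 2 * h" if "a \<in> {s0<..<s0+h}" "b \<in> {t0<..<t0+h}" for a b
    proof -
      have "dist (a, b) (s0, t0) \<le> norm (a - s0) + norm (b - t0)"
        using norm_Pair_le[of "a - s0" "b - t0"] by (simp add: dist_norm)
      with that show ?thesis by simp
    qed
    obtain \<xi> \<eta> \<sigma> \<tau> where box: "\<xi> \<in> {s0<..<s0+h}" "\<sigma> \<in> {s0<..<s0+h}"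
      "\<eta> \<in> {t0<..<t0+h}" "\<tau> \<in> {t0<..<t0+h}" and eq: "Gst \<xi> \<eta> = Gts \<sigma> \<tau>"
      using mixed_second_difference_mvt[OF d_s d_st d_t d_ts h] by metis
    have "dist (Gst \<xi> \<eta>) (Gst s0 t0) < e"
      using \<delta>st(2)[of "(\<xi>, \<eta>)"] near[OF box(1,3)] by (simp add: h_def)
    moreover have "dist (Gts \<sigma> \<tau>) (Gts s0 t0) < e"
      using \<delta>ts(2)[of "(\<sigma>, \<tau>)"] near[OF box(2,4)] by (simp add: h_def)
    ultimately show ?thesis using eq by (simp add: dist_real_def)
  qed
  have "Gst s0 t0 - Gts s0 t0 = 0"
    by (rule dense_eq0_I) (use close[of "e / 2" for e] in fastforce)
  then show ?thesis by simp
qed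

lemma has_real_derivative_pd:
  assumes "smooth_fn F"
  shows "((\<lambda>h. ipd as F (q(a := h))) has_real_derivative pd a (ipd as F) q) (at (q a))"
proof -
  have "(\<lambda>h. ipd as F (q(a := h))) differentiable (at (q a))"
    using assms unfolding smooth_fn_def by blast
  then show ?thesis unfolding pd_def by (simp add: DERIV_deriv_iff_real_differentiable)
qed

lemma pd_commute:
  assumes F: "smooth_fn F"
  shows "pd a (pd b F) p = pd b (pd a F) p"
proof (cases "a = b")
  case False
  define P where "P s t = p(a := s, b := t)" for s t
  have upd_a: "(P s t)(a := h) = P h t" and upd_b: "(P s t)(b := h) = P s h" for s t h
    using False by (simp_all add: P_def fun_upd_twist)
  have at_a: "P s t a = s" and at_b: "P s t b = t" for s t
    using False by (simp_all add: P_def)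
  have deriv_a: "((\<lambda>s. ipd as F (P s t)) has_real_derivative pd a (ipd as F) (P s t)) (at s)"
    for as s t using has_real_derivative_pd[OF F, of as "P s t" a] by (simp add: upd_a at_a)
  have deriv_b: "((\<lambda>t. ipd as F (P s t)) has_real_derivative pd b (ipd as F) (P s t)) (at t)"
    for as s t using has_real_derivative_pd[OF F, of as "P s t" b] by (simp add: upd_b at_b)
  have cont: "continuous_on UNIV (\<lambda>v. ipd as F (P (fst v) (snd v)))" for as
    using F unfolding smooth_fn_def P_def by blast
  have "pd b (pd a F) (P s0 t0) = pd a (pd b F) (P s0 t0)" for s0 t0
    using deriv_a[of "[]"] deriv_b[of "[a]"] deriv_b[of "[]"] deriv_a[of "[b]"]
      cont[of "[b, a]"] cont[of "[a, b]"]
    by (intro mixed_partials_eq[where G = "\<lambda>s t. F (P s t)"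
          and Gs = "\<lambda>s t. pd a F (P s t)" and Gt = "\<lambda>s t. pd b F (P s t)"]) simp_all
  from this[of "p a" "p b"] show ?thesis by (simp add: P_def)
qed simp

lemma smooth_fn_pd:
  assumes "smooth_fn F" shows "smooth_fn (pd a F)"
proof -
  have "ipd as (pd a F) = ipd (as @ [a]) F" for as
    by (induction as) auto
  then show ?thesis using assms unfolding smooth_fn_def by metis
qed

lemma pd_coord: "pd a (\<lambda>q. q b) p = (if a = b then 1 else 0)"
  unfolding pd_def by (cases "a = b") (auto intro!: DERIV_imp_deriv derivative_eq_intros)

lemma pd_uminus_coord: "pd a (\<lambda>q. - q b) p = (if a = b then -1 else 0)"
  unfolding pd_def by (cases "a = b") (auto intro!: DERIV_imp_deriv derivative_eq_intros)

lemma pd_const: "pd a (\<lambda>q. c) p = 0"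
  unfolding pd_def by (auto intro!: DERIV_imp_deriv derivative_eq_intros)

lemma pd_uminus:
  assumes "smooth_fn F"
  shows "pd a (\<lambda>q. - F q) p = - pd a F p"
proof -
  have "((\<lambda>h. - F (p(a := h))) has_real_derivative - pd a F p) (at (p a))"
    using has_real_derivative_pd[OF assms, of "[]" p a] by (auto intro!: derivative_eq_intros)
  then show ?thesis unfolding pd_def by (rule DERIV_imp_deriv)
qed

lemma pd_uminus_diff:
  assumes "smooth_fn F" "smooth_fn G"
  shows "pd a (\<lambda>q. - F q - G q) p = - pd a F p - pd a G p"
proof -
  have "((\<lambda>h. - F (p(a := h)) - G (p(a := h))) has_real_derivative - pd a F p - pd a G p) (at (p a))"
    using has_real_derivative_pd[OF assms(1), of "[]" p a]
      has_real_derivative_pd[OF assms(2), of "[]" p a]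
    by (auto intro!: derivative_eq_intros)
  then show ?thesis unfolding pd_def by (rule DERIV_imp_deriv)
qed

notation fls_nth (infixl \<open>$$\<close> 75)
\<comment> \<open>series are in \<mu> = 1/\<lambda>, so F $$ n is the coefficient of \<lambda>^(-n)\<close>

definition neg_powers :: "(nat \<Rightarrow> real) \<Rightarrow> real fls" where
  "neg_powers c = Abs_fls (\<lambda>n. if 0 < n then c (nat n) else 0)"

lemma neg_powers_nth [simp]: "neg_powers c $$ n = (if 0 < n then c (nat n) else 0)"
  unfolding neg_powers_def by (subst nth_Abs_fls) auto

lemma neg_powers_mult_nth [simp]:
  assumes "i \<le> 1"
  shows "(neg_powers c * neg_powers d) $$ i = 0"
proof (cases "neg_powers c = 0 \<or> neg_powers d = 0")
  case False
  then have "1 \<le> fls_subdegree (neg_powers c)" "1 \<le> fls_subdegree (neg_powers d)"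
    by (auto intro: fls_subdegree_geI)
  with assms show ?thesis by (intro fls_times_nth_eq0) auto
qed auto

lemma lamb_power_mult_nth [simp]: "(lamb ^ m * F) $$ i = F $$ (i + int m)"
  and mult_lamb_power_nth [simp]: "(F * lamb ^ m) $$ i = F $$ (i + int m)"
  unfolding lamb_def by (simp_all add: fls_X_inv_power_times_conv_shift)

lemma lamb_mult_nth [simp]: "(lamb * F) $$ i = F $$ (i + 1)"
  using lamb_power_mult_nth[of 1 F i] by simp

lemma lamb_power_nth [simp]: "lamb ^ m $$ i = (if i = - int m then 1 else 0)"
  unfolding lamb_def by simp

lemma lamb_nth [simp]: "lamb $$ i = (if i = - 1 then 1 else 0)"
  using lamb_power_nth[of 1 i] by simp

lemma lamb_polynomial_nth:
  "(\<Sum>k = 1..n. lamb ^ (n - k) * fls_const (c k)) $$ i =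
     (if - int n < i \<and> i \<le> 0 then c (nat (i + int n)) else 0)"
proof -
  have "(\<Sum>k = 1..n. lamb ^ (n - k) * fls_const (c k)) $$ i =
        (\<Sum>k = 1..n. if k = nat (i + int n) then c k else 0)"
    unfolding fls_nth_sum by (intro sum.cong) auto
  also have "\<dots> = (if - int n < i \<and> i \<le> 0 then c (nat (i + int n)) else 0)"
    by (auto simp: sum.delta')
  finally show ?thesis .
qed

lemma D_nth:
  assumes "\<And>k. N < k \<Longrightarrow> pd a (c (int k)) p = 0"
  shows "D a c p $$ n = pd a (c (- n)) p"
  unfolding D_def lser_def by (rule nth_Abs_fls_nat_lower_bound[of N]) (simp add: assms)

lemma D_coeffs_nth:
  assumes "\<And>i q. i < - int N \<Longrightarrow> H q $$ i = 0"
  shows "D a (coeffs H) p $$ i = pd a (\<lambda>q. H q $$ i) p"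
proof -
  have "coeffs H (int k) = (\<lambda>q. 0)" if "N < k" for k
    using assms that unfolding coeffs_def lcoeff_def by auto
  then have "D a (coeffs H) p $$ i = pd a (coeffs H (- i)) p"
    by (intro D_nth[of N]) (simp add: pd_const)
  then show ?thesis unfolding coeffs_def lcoeff_def by simp
qed

lemma coord_index_bound:
  obtains N where "\<And>k. N < k \<Longrightarrow> a \<noteq> Z k \<and> a \<noteq> T k"
proof -
  have "\<forall>k. (case a of Z j \<Rightarrow> j | T j \<Rightarrow> j | _ \<Rightarrow> 0) < k \<longrightarrow> a \<noteq> Z k \<and> a \<noteq> T k"
    by (cases a) auto
  with that show thesis by blast
qed

lemma D_phi1_nth:
  "D a (phi1 g) p $$ n =
     (if 0 < n then pd a (g (nat n)) p
      else if n = 0 then (if a = Y then -1 else 0)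
      else if a = Z (nat (- n) + 1) then 1 else 0)"
proof -
  obtain N where "\<And>k. N < k \<Longrightarrow> a \<noteq> Z k" by (metis coord_index_bound)
  then have "D a (phi1 g) p $$ n = pd a (phi1 g (- n)) p"
    by (intro D_nth[of N]) (simp add: phi1_def pd_coord)
  then show ?thesis by (auto simp: phi1_def pd_coord pd_uminus_coord)
qed

lemma D_phi2_nth:
  "D a (phi2 f) p $$ n =
     (if 0 < n then pd a (f (nat n)) p
      else if n = 0 then (if a = X then 1 else 0)
      else if a = T (nat (- n)) then 1 else 0)"
proof -
  obtain N where "\<And>k. N < k \<Longrightarrow> a \<noteq> T k" by (metis coord_index_bound)
  then have "D a (phi2 f) p $$ n = pd a (phi2 f (- n)) p"
    by (intro D_nth[of N]) (simp add: phi2_def pd_coord)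
  then show ?thesis by (auto simp: phi2_def pd_coord)
qed

lemma D_X_phi1: "D X (phi1 g) p = neg_powers (\<lambda>k. pd X (g k) p)"
  and D_Y_phi1: "D Y (phi1 g) p = -1 + neg_powers (\<lambda>k. pd Y (g k) p)"
  and D_T_phi1: "D (T n) (phi1 g) p = neg_powers (\<lambda>k. pd (T n) (g k) p)"
  and D_Z1_phi1: "D (Z 1) (phi1 g) p = neg_powers (\<lambda>k. pd (Z 1) (g k) p)"
  by (rule fls_eqI; simp add: D_phi1_nth)+

lemma D_Z_phi1:
  "j \<ge> 2 \<Longrightarrow> D (Z j) (phi1 g) p = lamb ^ (j - 1) + neg_powers (\<lambda>k. pd (Z j) (g k) p)"
  by (rule fls_eqI) (auto simp: D_phi1_nth)

lemma D_X_phi2: "D X (phi2 f) p = 1 + neg_powers (\<lambda>k. pd X (f k) p)"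
  and D_Y_phi2: "D Y (phi2 f) p = neg_powers (\<lambda>k. pd Y (f k) p)"
  and D_Z_phi2: "D (Z j) (phi2 f) p = neg_powers (\<lambda>k. pd (Z j) (f k) p)"
  by (rule fls_eqI; simp add: D_phi2_nth)+

lemma D_T_phi2:
  "n \<ge> 1 \<Longrightarrow> D (T n) (phi2 f) p = lamb ^ n + neg_powers (\<lambda>k. pd (T n) (f k) p)"
  by (rule fls_eqI) (auto simp: D_phi2_nth)

section \<open>The hierarchy and Cramer's rule\<close>

definition wedge_coeff ::
    "(nat \<Rightarrow> point \<Rightarrow> real) \<Rightarrow> (nat \<Rightarrow> point \<Rightarrow> real) \<Rightarrow> coord \<Rightarrow> coord \<Rightarrow> point \<Rightarrow> real fls"
  where "wedge_coeff g f a b p = lamb ^ (zcount a + zcount b) *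
           (D a (phi1 g) p * D b (phi2 f) p - D b (phi1 g) p * D a (phi2 f) p)"

lemma wedge_coeff_nth_pos:
  assumes "DF_hierarchy g f" "valid_coord a" "valid_coord b" "0 < i"
  shows "wedge_coeff g f a b p $$ i = 0"
proof -
  have "neg_part_zero (wedge_coeff g f a b p)"
    using assms unfolding DF_hierarchy_def wedge_coeff_def by blast
  with assms(4) show ?thesis unfolding neg_part_zero_def lcoeff_def
    by (metis minus_minus neg_less_0_iff_less)
qed

lemma eq_wedge_coeffI:
  assumes "DF_hierarchy g f" "valid_coord a" "valid_coord b"
    and "\<And>i. 0 < i \<Longrightarrow> F $$ i = 0"
    and "\<And>i. i \<le> 0 \<Longrightarrow> F $$ i = wedge_coeff g f a b p $$ i"
  shows "F = wedge_coeff g f a b p"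
proof (rule fls_eqI)
  show "F $$ i = wedge_coeff g f a b p $$ i" for i
    using assms wedge_coeff_nth_pos[OF assms(1-3)] by (cases "0 < i") auto
qed

lemma wedge_coeff_X_Y:
  assumes "DF_hierarchy g f"
  shows "wedge_coeff g f X Y p = 1"
  by (rule eq_wedge_coeffI[OF assms, symmetric])
     (auto simp: wedge_coeff_def D_X_phi1 D_Y_phi1 D_X_phi2 D_Y_phi2 ring_distribs)

lemma PB_phi_by_Cramer:
  assumes hier: "DF_hierarchy g f"
    and HX: "D X H p = wedge_coeff g f X a p" and HY: "D Y H p = wedge_coeff g f Y a p"
  shows "PB H (phi1 g) p = lamb ^ zcount a * D a (phi1 g) p"
    and "PB H (phi2 f) p = lamb ^ zcount a * D a (phi2 f) p"
proof -
  have det: "D X (phi1 g) p * D Y (phi2 f) p - D Y (phi1 g) p * D X (phi2 f) p = 1"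
    using wedge_coeff_X_Y[OF hier, of p] by (simp add: wedge_coeff_def)
  have "PB H (phi1 g) p = lamb ^ zcount a * D a (phi1 g) p *
      (D X (phi1 g) p * D Y (phi2 f) p - D Y (phi1 g) p * D X (phi2 f) p)"
    and "PB H (phi2 f) p = lamb ^ zcount a * D a (phi2 f) p *
      (D X (phi1 g) p * D Y (phi2 f) p - D Y (phi1 g) p * D X (phi2 f) p)"
    unfolding PB_def HX HY wedge_coeff_def by (simp_all add: algebra_simps)
  with det show "PB H (phi1 g) p = lamb ^ zcount a * D a (phi1 g) p"
    and "PB H (phi2 f) p = lamb ^ zcount a * D a (phi2 f) p" by simp_all
qed

definition ham_T :: "(nat \<Rightarrow> point \<Rightarrow> real) \<Rightarrow> nat \<Rightarrow> point \<Rightarrow> real fls" where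
  "ham_T g n = (\<lambda>q. - (lamb ^ n * fls_const (q Y))
                    + (\<Sum>k = 1..n. lamb ^ (n - k) * fls_const (g k q)))"

definition ham_Z :: "(nat \<Rightarrow> point \<Rightarrow> real) \<Rightarrow> (point \<Rightarrow> real) \<Rightarrow> nat \<Rightarrow> point \<Rightarrow> real fls" where
  "ham_Z f u j = (\<lambda>q. - (lamb ^ j * fls_const (q X))
                      - (\<Sum>m = 1..j. lamb ^ (j - m) * fls_const (f m q))
                      - fls_const (pd (Z j) u q))"

definition ham_Z1 :: "(point \<Rightarrow> real) \<Rightarrow> point \<Rightarrow> real fls" where
  "ham_Z1 u = (\<lambda>q. - fls_const (pd (Z 1) u q))"

lemma D_ham_T_nth:
  "D a (coeffs (ham_T g n)) p $$ i =
     (if i = - int n then (if a = Y then -1 else 0)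
      else if - int n < i \<and> i \<le> 0 then pd a (g (nat (i + int n))) p else 0)"
proof -
  have coeff: "ham_T g n q $$ i = (if i = - int n then - q Y else 0) +
      (if - int n < i \<and> i \<le> 0 then g (nat (i + int n)) q else 0)" for q i
    unfolding ham_T_def fls_plus_nth fls_uminus_nth lamb_polynomial_nth by simp
  then have "D a (coeffs (ham_T g n)) p $$ i = pd a (\<lambda>q. ham_T g n q $$ i) p"
    by (intro D_coeffs_nth[of n]) simp
  also have "\<dots> = (if i = - int n then (if a = Y then -1 else 0)
      else if - int n < i \<and> i \<le> 0 then pd a (g (nat (i + int n))) p else 0)"
  proof -
    consider "i = - int n" | "- int n < i \<and> i \<le> 0" | "i < - int n \<or> 0 < i"
      by fastforce
    then show ?thesis by cases (auto simp: coeff pd_uminus_coord pd_const)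
  qed
  finally show ?thesis .
qed

lemma D_ham_Z_nth:
  assumes f: "\<And>m. m \<ge> 1 \<Longrightarrow> smooth_fn (f m)" and u: "smooth_fn u" and j: "j \<ge> 2"
  shows "D a (coeffs (ham_Z f u j)) p $$ i =
     (if i = - int j then (if a = X then -1 else 0)
      else if - int j < i \<and> i < 0 then - pd a (f (nat (i + int j))) p
      else if i = 0 then - pd a (f j) p - pd a (pd (Z j) u) p else 0)"
proof -
  have coeff: "ham_Z f u j q $$ i = (if i = - int j then - q X else 0) -
      (if - int j < i \<and> i \<le> 0 then f (nat (i + int j)) q else 0) - (if i = 0 then pd (Z j) u q else 0)"
    for q i unfolding ham_Z_def fls_minus_nth fls_uminus_nth lamb_polynomial_nth by simp
  then have "D a (coeffs (ham_Z f u j)) p $$ i = pd a (\<lambda>q. ham_Z f u j q $$ i) p"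
    by (intro D_coeffs_nth[of j]) simp
  also have "\<dots> = (if i = - int j then (if a = X then -1 else 0)
      else if - int j < i \<and> i < 0 then - pd a (f (nat (i + int j))) p
      else if i = 0 then - pd a (f j) p - pd a (pd (Z j) u) p else 0)"
  proof -
    consider "i = - int j" | "- int j < i \<and> i < 0" | "i = 0" | "i < - int j \<or> 0 < i"
      by fastforce
    then show ?thesis
    proof cases
      case 2
      then have "smooth_fn (f (nat (i + int j)))" by (intro f) linarith
      with 2 show ?thesis by (simp add: coeff pd_uminus)
    next
      case 3
      with j f[of j] show ?thesis by (simp add: coeff pd_uminus_diff smooth_fn_pd u)
    qed (use j in \<open>auto simp: coeff pd_uminus_coord pd_const\<close>)
  qed
  finally show ?thesis .
qed

lemma D_ham_Z1_nth:
  assumes u: "smooth_fn u"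
  shows "D a (coeffs (ham_Z1 u)) p $$ i = (if i = 0 then - pd a (pd (Z 1) u) p else 0)"
proof -
  have "D a (coeffs (ham_Z1 u)) p $$ i = pd a (\<lambda>q. ham_Z1 u q $$ i) p"
    by (intro D_coeffs_nth[of 0]) (simp add: ham_Z1_def)
  then show ?thesis
    by (cases "i = 0") (simp_all add: ham_Z1_def pd_uminus smooth_fn_pd u pd_const)
qed

lemma D_X_ham_T:
  assumes "DF_hierarchy g f" "n \<ge> 1"
  shows "D X (coeffs (ham_T g n)) p = wedge_coeff g f X (T n) p"
  using assms by (intro eq_wedge_coeffI)
    (auto simp: D_ham_T_nth wedge_coeff_def D_X_phi1 D_T_phi1 D_X_phi2 D_T_phi2 ring_distribs)

lemma D_Y_ham_T:
  assumes "DF_hierarchy g f" "n \<ge> 1"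
  shows "D Y (coeffs (ham_T g n)) p = wedge_coeff g f Y (T n) p"
  using assms by (intro eq_wedge_coeffI)
    (auto simp: D_ham_T_nth wedge_coeff_def D_Y_phi1 D_T_phi1 D_Y_phi2 D_T_phi2 ring_distribs)

lemma D_X_ham_Z:
  assumes "DF_hierarchy g f" "\<And>m. m \<ge> 1 \<Longrightarrow> smooth_fn (f m)" "smooth_fn u" "j \<ge> 2"
    and "g 1 = pd X u"
  shows "D X (coeffs (ham_Z f u j)) p = wedge_coeff g f X (Z j) p"
  using assms pd_commute[OF \<open>smooth_fn u\<close>, of X "Z j" p]
  by (intro eq_wedge_coeffI)
    (auto simp: D_ham_Z_nth wedge_coeff_def D_X_phi1 D_Z_phi1 D_X_phi2 D_Z_phi2 ring_distribs)

lemma D_Y_ham_Z: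
  assumes "DF_hierarchy g f" "\<And>m. m \<ge> 1 \<Longrightarrow> smooth_fn (f m)" "smooth_fn u" "j \<ge> 2"
    and "f 1 = pd Y u"
  shows "D Y (coeffs (ham_Z f u j)) p = wedge_coeff g f Y (Z j) p"
  using assms pd_commute[OF \<open>smooth_fn u\<close>, of Y "Z j" p]
  by (intro eq_wedge_coeffI)
    (auto simp: D_ham_Z_nth wedge_coeff_def D_Y_phi1 D_Z_phi1 D_Y_phi2 D_Z_phi2 ring_distribs)

lemma D_X_ham_Z1:
  assumes "DF_hierarchy g f" "smooth_fn u" "g 1 = pd X u"
  shows "D X (coeffs (ham_Z1 u)) p = wedge_coeff g f X (Z 1) p"
  using assms pd_commute[OF \<open>smooth_fn u\<close>, of X "Z 1" p]
  by (intro eq_wedge_coeffI)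
    (auto simp: D_ham_Z1_nth wedge_coeff_def D_X_phi1 D_Z1_phi1[simplified] D_X_phi2 D_Z_phi2
      ring_distribs)

lemma D_Y_ham_Z1:
  assumes "DF_hierarchy g f" "smooth_fn u" "f 1 = pd Y u"
  shows "D Y (coeffs (ham_Z1 u)) p = wedge_coeff g f Y (Z 1) p"
  using assms pd_commute[OF \<open>smooth_fn u\<close>, of Y "Z 1" p]
  by (intro eq_wedge_coeffI)
    (auto simp: D_ham_Z1_nth wedge_coeff_def D_Y_phi1 D_Z1_phi1[simplified] D_Y_phi2 D_Z_phi2
      ring_distribs)

theorem mainTheorem3:
  fixes g f :: "nat \<Rightarrow> point \<Rightarrow> real" and u :: "point \<Rightarrow> real"
  assumes smooth_g: "\<And>k. k \<ge> 1 \<Longrightarrow> smooth_fn (g k)"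
    and smooth_f: "\<And>m. m \<ge> 1 \<Longrightarrow> smooth_fn (f m)"
    and smooth_u: "smooth_fn u"
    and hier: "DF_hierarchy g f"
    and g1: "g 1 = pd X u"
    and f1: "f 1 = pd Y u"
  shows
    "(\<forall>n \<ge> 1. \<forall>p.
        D (T n) (phi1 g) p =
          PB (coeffs (\<lambda>q. - (lamb ^ n * fls_const (q Y))
                           + (\<Sum>k = 1..n. lamb ^ (n - k) * fls_const (g k q)))) (phi1 g) p
      \<and> D (T n) (phi2 f) p =
          PB (coeffs (\<lambda>q. - (lamb ^ n * fls_const (q Y))
                           + (\<Sum>k = 1..n. lamb ^ (n - k) * fls_const (g k q)))) (phi2 f) p)
   \<and> (\<forall>j \<ge> 2. \<forall>p.
        lamb * D (Z j) (phi1 g) p =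
          PB (coeffs (\<lambda>q. - (lamb ^ j * fls_const (q X))
                           - (\<Sum>m = 1..j. lamb ^ (j - m) * fls_const (f m q))
                           - fls_const (pd (Z j) u q))) (phi1 g) p
      \<and> lamb * D (Z j) (phi2 f) p =
          PB (coeffs (\<lambda>q. - (lamb ^ j * fls_const (q X))
                           - (\<Sum>m = 1..j. lamb ^ (j - m) * fls_const (f m q))
                           - fls_const (pd (Z j) u q))) (phi2 f) p)
   \<and> (\<forall>p.
        lamb * D (Z 1) (phi1 g) p = PB (coeffs (\<lambda>q. - fls_const (pd (Z 1) u q))) (phi1 g) p
      \<and> lamb * D (Z 1) (phi2 f) p = PB (coeffs (\<lambda>q. - fls_const (pd (Z 1) u q))) (phi2 f) p)"
  unfolding ham_T_def[symmetric] ham_Z_def[symmetric] ham_Z1_def[symmetric]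
proof (intro conjI allI impI)
  fix n :: nat and p assume "1 \<le> n"
  note flow = PB_phi_by_Cramer[OF hier D_X_ham_T[OF hier this] D_Y_ham_T[OF hier this]]
  show "D (T n) (phi1 g) p = PB (coeffs (ham_T g n)) (phi1 g) p"
    and "D (T n) (phi2 f) p = PB (coeffs (ham_T g n)) (phi2 f) p"
    using flow by simp_all
next
  fix j :: nat and p assume "2 \<le> j"
  note flow = PB_phi_by_Cramer[OF hier D_X_ham_Z[OF hier smooth_f smooth_u this g1]
      D_Y_ham_Z[OF hier smooth_f smooth_u this f1]]
  show "lamb * D (Z j) (phi1 g) p = PB (coeffs (ham_Z f u j)) (phi1 g) p"
    and "lamb * D (Z j) (phi2 f) p = PB (coeffs (ham_Z f u j)) (phi2 f) p"
    using flow by simp_all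
next
  fix p
  note flow = PB_phi_by_Cramer[OF hier D_X_ham_Z1[OF hier smooth_u g1] D_Y_ham_Z1[OF hier smooth_u f1]]
  show "lamb * D (Z 1) (phi1 g) p = PB (coeffs (ham_Z1 u)) (phi1 g) p"
    and "lamb * D (Z 1) (phi2 f) p = PB (coeffs (ham_Z1 u)) (phi2 f) p"
    using flow by simp_all
qed

end
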